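(* Let $(\mathcal Y,\mu)$ be a measure space and $p,q\ge0$ $\mu$-integrable functions on $\mathcal Y$. Then $$\sup_{\phi,\psi}\Big\{\int_{\mathcal Y}(p\phi-q\psi)\,d\mu:\ 0\le\phi\le\psi\le2,\ \sup\phi\le1+\inf\psi\Big\}=\int(p-q)_+\,d\mu+\Big(\int(p-q)\,d\mu\Big)_+,$$ where the supremum is over measurable $\phi,\psi:\mathcal Y\to\mathbb R$ and $(x)_+=\max\{x,0\}$. *)

theory Defs
  imports "HOL-Analysis.Analysis"
begin

end

theory Submission
  imports Defs
begin

text \<open>
  Let \<open>c\<close> be \<open>inf \<psi>\<close> truncated to \<open>[0, 1]\<close>. The constraints force \<open>c \<le> \<psi>\<close> and \<open>\<phi> \<le> 1 + c\<close>,
  and then pointwise \<open>p \<phi> - q \<psi> \<le> (p - q)\<^sub>+ + c (p - q)\<close>. Integrating, every admissible pair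
  is dominated by \<open>\<integral>(p - q)\<^sub>+ + c \<integral>(p - q) \<le> \<integral>(p - q)\<^sub>+ + (\<integral>(p - q))\<^sub>+\<close>.
  Conversely the pair \<open>\<phi> = \<psi> = c + 1\<^bsub>{p > q}\<^esub>\<close> attains \<open>\<integral>(p - q)\<^sub>+ + c \<integral>(p - q)\<close>
  exactly, so choosing \<open>c = 1\<close> or \<open>c = 0\<close> according to the sign of \<open>\<integral>(p - q)\<close> shows
  that the supremum is a maximum.
\<close>

definition admissible_pair :: "'a measure \<Rightarrow> ('a \<Rightarrow> real) \<Rightarrow> ('a \<Rightarrow> real) \<Rightarrow> bool" where
  "admissible_pair M \<phi> \<psi> \<longleftrightarrow>
     \<phi> \<in> borel_measurable M \<and> \<psi> \<in> borel_measurable M \<and>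
     (\<forall>x\<in>space M. 0 \<le> \<phi> x \<and> \<phi> x \<le> \<psi> x \<and> \<psi> x \<le> 2) \<and>
     (\<forall>x\<in>space M. \<forall>y\<in>space M. \<phi> x \<le> 1 + \<psi> y)"

lemma integrable_mult_bounded:
  fixes f g :: "'a \<Rightarrow> real"
  assumes "integrable M f" "g \<in> borel_measurable M" "\<forall>x\<in>space M. \<bar>g x\<bar> \<le> C"
  shows "integrable M (\<lambda>x. f x * g x)"
proof (rule Bochner_Integration.integrable_bound[where f="\<lambda>x. C * f x"])
  show "integrable M (\<lambda>x. C * f x)" using assms(1) by simp
  show "(\<lambda>x. f x * g x) \<in> borel_measurable M"
    using assms(1,2) by (simp add: borel_measurable_integrable)
  show "AE x in M. norm (f x * g x) \<le> norm (C * f x)"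
  proof (intro AE_I2 impI)
    fix x assume "x \<in> space M"
    then have "\<bar>g x\<bar> * \<bar>f x\<bar> \<le> C * \<bar>f x\<bar>" using assms(3)
      by (intro mult_right_mono) auto
    moreover have "0 \<le> C" using assms(3) \<open>x \<in> space M\<close> by fastforce
    ultimately show "norm (f x * g x) \<le> norm (C * f x)" by (simp add: abs_mult mult.commute)
  qed
qed

lemma mult_le_max_zero:
  fixes a c :: real
  assumes "0 \<le> c" "c \<le> 1"
  shows "c * a \<le> max a 0"
proof (cases "0 \<le> a")
  case True
  then have "c * a \<le> 1 * a" using assms by (intro mult_right_mono) auto
  then show ?thesis by simp
next
  case False
  then show ?thesis using assms by (simp add: mult_nonneg_nonpos)
qed

lemma admissible_integrand_le:
  fixes p q \<phi> \<psi> c :: real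
  assumes "0 \<le> p" "0 \<le> q" "0 \<le> \<phi>" "\<phi> \<le> \<psi>" "\<phi> \<le> 1 + c" "c \<le> \<psi>" "0 \<le> c" "c \<le> 1"
  shows "p * \<phi> - q * \<psi> \<le> max (p - q) 0 + c * (p - q)"
proof -
  have "q * max \<phi> c \<le> q * \<psi>" using assms by (intro mult_left_mono) auto
  moreover have "p * \<phi> - q * max \<phi> c \<le> max (p - q) 0 + c * (p - q)"
  proof (cases "\<phi> \<le> c")
    case True
    then have "p * \<phi> \<le> p * c" using assms by (intro mult_left_mono) auto
    then show ?thesis using True by (auto simp: max_def algebra_simps)
  next
    case False
    then have "(p - q) * (\<phi> - c) \<le> max (p - q) 0"
      using mult_le_max_zero[of "\<phi> - c" "p - q"] assms by (simp add: mult.commute)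
    then show ?thesis using False by (auto simp: max_def algebra_simps)
  qed
  ultimately show ?thesis by linarith
qed

lemma admissible_pair_obtains_level:
  assumes "admissible_pair M \<phi> \<psi>"
  obtains c where "0 \<le> c" "c \<le> 1" "\<forall>x\<in>space M. \<phi> x \<le> 1 + c \<and> c \<le> \<psi> x"
proof (cases "space M = {}")
  case True
  then show ?thesis using that[of 0] by auto
next
  case False
  note bounds = assms[unfolded admissible_pair_def]
  define c where "c = Inf (\<psi> ` space M)"
  have "bdd_below (\<psi> ` space M)" using bounds by (intro bdd_belowI[of _ 0]) force
  then have below_\<psi>: "\<forall>x\<in>space M. c \<le> \<psi> x" unfolding c_def by (auto intro: cInf_lower)
  have above_\<phi>: "\<forall>x\<in>space M. \<phi> x - 1 \<le> c"
    unfolding c_def using False bounds by (intro ballI cInf_greatest) force+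
  have "0 \<le> c" unfolding c_def using False bounds by (intro cInf_greatest) force+
  then show ?thesis using below_\<psi> above_\<phi> bounds that[of "min c 1"] by force
qed

context
  fixes M :: "'a measure" and p q :: "'a \<Rightarrow> real"
  assumes p: "integrable M p" and q: "integrable M q"
    and p_nonneg: "\<forall>x\<in>space M. p x \<ge> 0" and q_nonneg: "\<forall>x\<in>space M. q x \<ge> 0"
begin

lemma integrable_diff_pos_part: "integrable M (\<lambda>x. max (p x - q x) 0)"
  using p q by auto

lemma admissible_pair_integral_le:
  assumes "admissible_pair M \<phi> \<psi>"
  shows "(LINT x|M. p x * \<phi> x - q x * \<psi> x)
           \<le> (LINT x|M. max (p x - q x) 0) + max (LINT x|M. p x - q x) 0"
proof -
  note bounds = assms[unfolded admissible_pair_def]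
  obtain c where c: "0 \<le> c" "c \<le> 1" "\<forall>x\<in>space M. \<phi> x \<le> 1 + c \<and> c \<le> \<psi> x"
    using admissible_pair_obtains_level[OF assms] .
  have "integrable M (\<lambda>x. p x * \<phi> x)" "integrable M (\<lambda>x. q x * \<psi> x)"
    using bounds by (auto intro!: integrable_mult_bounded[where C=2] p q)
  then have "(LINT x|M. p x * \<phi> x - q x * \<psi> x)
               \<le> (LINT x|M. max (p x - q x) 0 + c * (p x - q x))"
    using p q c p_nonneg q_nonneg bounds
    by (intro integral_mono admissible_integrand_le) auto
  also have "\<dots> = (LINT x|M. max (p x - q x) 0) + c * (LINT x|M. p x - q x)"
    using integrable_diff_pos_part p q by simp
  also have "\<dots> \<le> (LINT x|M. max (p x - q x) 0) + max (LINT x|M. p x - q x) 0"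
    using mult_le_max_zero c by simp
  finally show ?thesis .
qed

lemma admissible_pair_level_indicator:
  fixes c :: real
  defines "f \<equiv> \<lambda>x. c + (if q x < p x then 1 else 0)"
  assumes "0 \<le> c" "c \<le> 1"
  shows "admissible_pair M f f"
    and "(LINT x|M. p x * f x - q x * f x)
           = (LINT x|M. max (p x - q x) 0) + c * (LINT x|M. p x - q x)"
proof -
  have "Measurable.pred M (\<lambda>x. q x < p x)"
    using p q by (auto simp: borel_measurable_integrable)
  then have "f \<in> borel_measurable M" unfolding f_def by measurable
  then show "admissible_pair M f f" using assms by (auto simp: admissible_pair_def f_def)
  have "\<And>x. p x * f x - q x * f x = max (p x - q x) 0 + c * (p x - q x)"
    by (auto simp: f_def max_def algebra_simps)
  then show "(LINT x|M. p x * f x - q x * f x)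
               = (LINT x|M. max (p x - q x) 0) + c * (LINT x|M. p x - q x)"
    using integrable_diff_pos_part p q by simp
qed

end

theorem lemma2:
  fixes M :: "'a measure" and p q :: "'a \<Rightarrow> real"
  assumes "integrable M p" and "integrable M q"
    and "\<forall>x\<in>space M. p x \<ge> 0" and "\<forall>x\<in>space M. q x \<ge> 0"
  shows "Sup {(LINT x|M. p x * \<phi> x - q x * \<psi> x) | \<phi> \<psi>.
            \<phi> \<in> borel_measurable M \<and> \<psi> \<in> borel_measurable M \<and>
            (\<forall>x\<in>space M. 0 \<le> \<phi> x \<and> \<phi> x \<le> \<psi> x \<and> \<psi> x \<le> 2) \<and>
            (\<forall>x\<in>space M. \<forall>y\<in>space M. \<phi> x \<le> 1 + \<psi> y)}
         = (LINT x|M. max (p x - q x) 0) + max (LINT x|M. p x - q x) 0"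
    (is "Sup ?S = ?R")
proof -
  have S: "?S = {(LINT x|M. p x * \<phi> x - q x * \<psi> x) | \<phi> \<psi>. admissible_pair M \<phi> \<psi>}"
    unfolding admissible_pair_def ..
  define c :: real where "c = (if 0 \<le> (LINT x|M. p x - q x) then 1 else 0)"
  have "?R = (LINT x|M. max (p x - q x) 0) + c * (LINT x|M. p x - q x)"
    by (simp add: c_def)
  then have "?R \<in> ?S"
    unfolding S using admissible_pair_level_indicator[OF assms, of c]
    by (force simp: c_def)
  moreover have "\<And>s. s \<in> ?S \<Longrightarrow> s \<le> ?R"
    unfolding S using admissible_pair_integral_le[OF assms] by blast
  ultimately show ?thesis by (rule cSup_eq_maximum)
qed

end
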